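(* Assume $5\gamma<\tau$, where $\tau=|S_c(P,B)|$, and let $c_e$ be the cost of the user at location $\tau-5\gamma$ of $S_c(P,B)$. Then for every mediator $m\in M$, $c_m\ge c_e$.
   Context: Model: finite sets of users $P$ (costs $c(p)\ge0$), mediators $M$ (the sets $P(m)$ partition $P$), advertisers $A$ (capacity $u(a)$ a positive integer, value $v(a)\ge0$); each advertiser $a$ has $u(a)$ slots of value $v(a)$; $B$ is the set of all slots. $\gamma\ge1$ is an integer-valued or real bound with $u(a)\le\gamma$ and $|P(m)|\le\gamma$ for all $a,m$ (locations such as $\tau-5\gamma$ are assumed to be positive integers). Costs/values are compared using a fixed tie-breaking rule making them all distinct. Canonical assignment $S_c(P',B')$: order slots of $B'$ by decreasing value $b_1,b_2,\dots$ and users of $P'$ by increasing cost $p_1,p_2,\dots$; include $(p_i,b_i)$ for $i\le\min\{|P'|,|B'|\}$ iff $v(b_i)>c(p_i)$; the user at location $i$ is $p_i$. Thresholds of the Price by Removal Mechanism: for each mediator $m$, if $|S_c(P\setminus P(m),B)|>4\gamma$, $c_m$ is the cost of the user at location $|S_c(P\setminus P(m),B)|-4\gamma$ of $S_c(P\setminus P(m),B)$; otherwise $c_m=-\infty$. *)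

theory Defs
  imports "HOL-Library.Extended_Real"
begin

text \<open>Slots: advertiser a has slots (a,0),...,(a,u a - 1), each of value v a.\<close>
definition slots :: "'a set \<Rightarrow> ('a \<Rightarrow> nat) \<Rightarrow> ('a \<times> nat) set" where
  "slots A u = {(a, j). a \<in> A \<and> j < u a}"

text \<open>A fixed enumeration of a finite set; used as the fixed tie-breaking rule.\<close>
definition enum_set :: "'x set \<Rightarrow> 'x list" where
  "enum_set S = (SOME xs. distinct xs \<and> set xs = S)"

definition users_order :: "('p \<Rightarrow> real) \<Rightarrow> 'p set \<Rightarrow> 'p list" where
  "users_order c P' = sort_key c (enum_set P')"

definition slots_order :: "('a \<Rightarrow> real) \<Rightarrow> ('a \<times> nat) set \<Rightarrow> ('a \<times> nat) list" where
  "slots_order v B' = sort_key (\<lambda>b. - v (fst b)) (enum_set B')"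

definition canonical ::
  "('p \<Rightarrow> real) \<Rightarrow> ('a \<Rightarrow> real) \<Rightarrow> 'p set \<Rightarrow> ('a \<times> nat) set \<Rightarrow> ('p \<times> ('a \<times> nat)) list" where
  "canonical c v P' B' =
     filter (\<lambda>(p, b). c p < v (fst b)) (zip (users_order c P') (slots_order v B'))"

text \<open>The user at (1-based) location i, i.e. p_i.\<close>
definition user_at :: "('p \<Rightarrow> real) \<Rightarrow> 'p set \<Rightarrow> nat \<Rightarrow> 'p" where
  "user_at c P' i = users_order c P' ! (i - 1)"

definition threshold ::
  "('p \<Rightarrow> real) \<Rightarrow> ('a \<Rightarrow> real) \<Rightarrow> 'p set \<Rightarrow> ('a \<times> nat) set \<Rightarrow> nat \<Rightarrow> 'p set \<Rightarrow> ereal" where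
  "threshold c v P B \<gamma> Pm =
     (let k = length (canonical c v (P - Pm) B) in
      if k > 4 * \<gamma> then ereal (c (user_at c (P - Pm) (k - 4 * \<gamma>))) else - \<infinity>)"

end

theory Submission
  imports Defs
begin

text \<open>Removing a set Y of at most \<gamma> users shifts every user of the cost-sorted list by at most
  |Y| places: the i-th cheapest remaining user costs at least the i-th and at most the
  (i+|Y|)-th cheapest original user. Since costs increase and slot values decrease, the
  canonical assignment is a prefix of the pairing, so it shrinks by at most |Y| \<le> \<gamma> entries.
  Hence the location defining c_m lies at or after location \<tau> - 5\<gamma>, and the user there,
  in the reduced list, costs at least the original user at \<tau> - 5\<gamma>.\<close>

lemma sorted_wrt_less_imp_distinct:
  "sorted_wrt (\<lambda>x y. f x < (f y :: real)) xs \<Longrightarrow> distinct xs"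
  by (induction xs) auto

lemma sorted_wrt_less_nth_le:
  assumes "sorted_wrt (\<lambda>x y. f x < (f y :: real)) xs" "j \<le> k" "k < length xs"
  shows "f (xs ! j) \<le> f (xs ! k)"
  using sorted_wrt_nth_less[OF assms(1) _ assms(3), of j] assms(2)
  by (cases "j = k") auto

lemma sorted_wrt_less_set_take:
  assumes sorted: "sorted_wrt (\<lambda>x y. f x < (f y :: real)) xs" and i: "i < length xs"
  shows "{y \<in> set xs. f y < f (xs ! i)} = set (take i xs)"
proof (intro equalityI subsetI)
  fix y assume "y \<in> {y \<in> set xs. f y < f (xs ! i)}"
  then obtain j where j: "j < length xs" "y = xs ! j" "f y < f (xs ! i)"
    by (auto simp: in_set_conv_nth)
  then have "j < i"
    using sorted_wrt_nth_less[OF sorted _ j(1), of i] by (cases "j = i") force+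
  then show "y \<in> set (take i xs)" using j by (auto simp: in_set_conv_nth)
next
  fix y assume "y \<in> set (take i xs)"
  then obtain j where "j < i" "y = xs ! j" using i by (auto simp: in_set_conv_nth)
  then show "y \<in> {y \<in> set xs. f y < f (xs ! i)}"
    using sorted_wrt_nth_less[OF sorted _ i, of j] i by auto
qed

lemma sorted_wrt_less_nth_sublist_ge:
  assumes sx: "sorted_wrt (\<lambda>x y. f x < (f y :: real)) xs"
    and sy: "sorted_wrt (\<lambda>x y. f x < f y) ys"
    and sub: "set ys \<subseteq> set xs" and i: "i < length ys"
  shows "f (xs ! i) \<le> f (ys ! i)"
proof (rule ccontr)
  assume "\<not> ?thesis"
  then have lt: "f (ys ! i) < f (xs ! i)" by simp
  have "length ys \<le> length xs"
    using card_mono[OF _ sub] by (simp add: distinct_card sorted_wrt_less_imp_distinct[OF sx]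
        sorted_wrt_less_imp_distinct[OF sy])
  with i have ix: "i < length xs" by simp
  \<comment> \<open>the i+1 cheapest elements of ys are all cheaper than the i-th of xs\<close>
  have "set (take (Suc i) ys) \<subseteq> set (take i xs)"
  proof
    fix y assume "y \<in> set (take (Suc i) ys)"
    then obtain j where "j < Suc i" "y = ys ! j" using i by (auto simp: in_set_conv_nth)
    then have "f y \<le> f (ys ! i)" "y \<in> set xs"
      using sorted_wrt_less_nth_le[OF sy _ i] i sub by auto
    with lt have "y \<in> {y \<in> set xs. f y < f (xs ! i)}" by simp
    then show "y \<in> set (take i xs)" unfolding sorted_wrt_less_set_take[OF sx ix] .
  qed
  from card_mono[OF _ this] have "card (set (take (Suc i) ys)) \<le> card (set (take i xs))" by simp
  moreover have "card (set (take (Suc i) ys)) = Suc i"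
    using i by (simp add: distinct_card sorted_wrt_less_imp_distinct[OF sy])
  moreover have "card (set (take i xs)) \<le> i" using card_length[of "take i xs"] by simp
  ultimately show False by simp
qed

lemma sorted_wrt_less_nth_sublist_le:
  assumes sx: "sorted_wrt (\<lambda>x y. f x < (f y :: real)) xs"
    and sy: "sorted_wrt (\<lambda>x y. f x < f y) ys"
    and i: "i < length ys" and k: "card (set xs - set ys) \<le> k" and ik: "i + k < length xs"
  shows "f (ys ! i) \<le> f (xs ! (i + k))"
proof (rule ccontr)
  assume "\<not> ?thesis"
  then have lt: "f (xs ! (i + k)) < f (ys ! i)" by simp
  define T where "T = set (take (Suc (i + k)) xs)"
  \<comment> \<open>of the i+k+1 cheapest elements of xs, at most i lie in ys and at most k outside\<close>
  have "T \<inter> set ys \<subseteq> set (take i ys)"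
  proof
    fix y assume y: "y \<in> T \<inter> set ys"
    then obtain j where "j < Suc (i + k)" "y = xs ! j"
      using ik unfolding T_def by (auto simp: in_set_conv_nth)
    then have "f y \<le> f (xs ! (i + k))" using sorted_wrt_less_nth_le[OF sx _ ik] by simp
    with lt y have "y \<in> {y \<in> set ys. f y < f (ys ! i)}" by simp
    then show "y \<in> set (take i ys)" unfolding sorted_wrt_less_set_take[OF sy i] .
  qed
  then have "card (T \<inter> set ys) \<le> card (set (take i ys))" by (intro card_mono) simp_all
  also have "\<dots> \<le> i" using card_length[of "take i ys"] by simp
  finally have inside: "card (T \<inter> set ys) \<le> i" .
  have "T - set ys \<subseteq> set xs - set ys" unfolding T_def by (rule Diff_mono[OF set_take_subset subset_refl])
  then have "card (T - set ys) \<le> card (set xs - set ys)" by (intro card_mono) simp_all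
  with k have outside: "card (T - set ys) \<le> k" by simp
  have "card T = Suc (i + k)"
    unfolding T_def using ik by (simp add: distinct_card sorted_wrt_less_imp_distinct[OF sx])
  moreover have "card T = card (T \<inter> set ys) + card (T - set ys)"
    unfolding T_def by (rule card_Int_Diff) simp
  ultimately show False using inside outside by linarith
qed

lemma filter_eq_takeWhile_if_downward_closed:
  assumes "\<And>j k. j \<le> k \<Longrightarrow> k < length zs \<Longrightarrow> Q (zs ! k) \<Longrightarrow> Q (zs ! j)"
  shows "filter Q zs = takeWhile Q zs"
proof (rule takeWhile_eq_filter[symmetric])
  define n where "n = length (takeWhile Q zs)"
  fix x assume "x \<in> set (dropWhile Q zs)"
  then obtain i where "i < length zs - n" "x = zs ! (n + i)"
    by (auto simp: dropWhile_eq_drop in_set_conv_nth n_def)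
  then have i: "n + i < length zs" "x = zs ! (n + i)" by simp_all
  moreover have "\<not> Q (zs ! n)"
    using nth_length_takeWhile[of Q zs] i(1) unfolding n_def by simp
  ultimately show "\<not> Q x"
    using assms[of n "n + i"] by auto
qed

lemma takeWhile_nth_holds: "j < length (takeWhile Q zs) \<Longrightarrow> Q (zs ! j)"
  using set_takeWhileD[OF nth_mem] takeWhile_nth by metis

lemma enum_set: "finite S \<Longrightarrow> distinct (enum_set S) \<and> set (enum_set S) = S"
  unfolding enum_set_def by (rule someI_ex) (metis finite_distinct_list)

lemma
  assumes "finite X" "inj_on c X"
  shows set_users_order: "set (users_order c X) = X"
    and length_users_order: "length (users_order c X) = card X"
    and users_order_sorted_wrt: "sorted_wrt (\<lambda>x y. c x < c y) (users_order c X)"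
proof -
  have distinct: "distinct (users_order c X)"
    using enum_set[OF assms(1)] by (simp add: users_order_def)
  show set: "set (users_order c X) = X"
    using enum_set[OF assms(1)] by (simp add: users_order_def)
  show "length (users_order c X) = card X"
    using distinct set distinct_card by fastforce
  have "sorted (map c (users_order c X))"
    unfolding users_order_def by (simp add: sorted_sort_key)
  moreover have "distinct (map c (users_order c X))"
    using distinct set assms(2) by (simp add: distinct_map)
  ultimately show "sorted_wrt (\<lambda>x y. c x < c y) (users_order c X)"
    by (simp add: strict_sorted_iff sorted_wrt_map[symmetric])
qed

lemma slots_order_antimono:
  assumes "j \<le> k" "k < length (slots_order v B)"
  shows "v (fst (slots_order v B ! k)) \<le> v (fst (slots_order v B ! j))"
proof -
  have "sorted (map (\<lambda>b. - v (fst b)) (slots_order v B))"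
    unfolding slots_order_def by (simp add: sorted_sort_key)
  then show ?thesis using assms by (auto simp: sorted_iff_nth_mono)
qed

lemma canonical_eq_takeWhile:
  assumes "finite X" "inj_on c X"
  shows "canonical c v X B =
    takeWhile (\<lambda>(p, b). c p < v (fst b)) (zip (users_order c X) (slots_order v B))"
  unfolding canonical_def
proof (rule filter_eq_takeWhile_if_downward_closed)
  fix j k
  let ?U = "users_order c X" and ?S = "slots_order v B"
  assume jk: "j \<le> k" and k: "k < length (zip ?U ?S)"
    and "(\<lambda>(p, b). c p < v (fst b)) (zip ?U ?S ! k)"
  then have "c (?U ! k) < v (fst (?S ! k))" by simp
  moreover have "c (?U ! j) \<le> c (?U ! k)"
    using sorted_wrt_less_nth_le[OF users_order_sorted_wrt[OF assms] jk] k by simp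
  moreover have "v (fst (?S ! k)) \<le> v (fst (?S ! j))"
    using slots_order_antimono[OF jk, of v B] k by simp
  ultimately show "(\<lambda>(p, b). c p < v (fst b)) (zip ?U ?S ! j)" using jk k by simp
qed

lemma users_order_Diff_nth_ge:
  assumes "finite X" "inj_on c X" "i < card (X - Y)"
  shows "c (users_order c X ! i) \<le> c (users_order c (X - Y) ! i)"
proof -
  have "finite (X - Y)" "inj_on c (X - Y)" using assms by (simp_all add: inj_on_diff)
  then show ?thesis
    using sorted_wrt_less_nth_sublist_ge[OF users_order_sorted_wrt[OF assms(1,2)]
        users_order_sorted_wrt] assms
    by (simp add: set_users_order length_users_order)
qed

lemma users_order_Diff_nth_le:
  assumes "finite X" "inj_on c X" "Y \<subseteq> X" "i + card Y < card X"
  shows "c (users_order c (X - Y) ! i) \<le> c (users_order c X ! (i + card Y))"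
proof -
  have fin: "finite (X - Y)" "inj_on c (X - Y)" using assms by (simp_all add: inj_on_diff)
  have "finite Y" using assms(1,3) finite_subset by blast
  then have "i < card (X - Y)" using assms by (simp add: card_Diff_subset)
  then show ?thesis
    using sorted_wrt_less_nth_sublist_le[OF users_order_sorted_wrt[OF assms(1,2)]
        users_order_sorted_wrt[OF fin]] assms fin
    by (simp add: set_users_order length_users_order Diff_Diff_Int Int_absorb1)
qed

lemma length_canonical_Diff_ge:
  assumes fin: "finite X" and inj: "inj_on c X" and Y: "Y \<subseteq> X"
  shows "length (canonical c v X B) - card Y \<le> length (canonical c v (X - Y) B)"
proof -
  let ?Q = "\<lambda>(p, b). c p < v (fst b)"
  let ?U = "users_order c X" and ?U' = "users_order c (X - Y)" and ?S = "slots_order v B"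
  define \<tau> where "\<tau> = length (canonical c v X B)"
  have fin': "finite (X - Y)" "inj_on c (X - Y)" using fin inj by (simp_all add: inj_on_diff)
  have "finite Y" using fin Y finite_subset by blast
  then have card': "card (X - Y) = card X - card Y" using Y by (simp add: card_Diff_subset)
  have \<tau>: "\<tau> = length (takeWhile ?Q (zip ?U ?S))"
    unfolding \<tau>_def canonical_eq_takeWhile[OF fin inj] ..
  have \<tau>_le: "\<tau> \<le> card X" "\<tau> \<le> length ?S"
    unfolding \<tau> using length_takeWhile_le[of ?Q "zip ?U ?S"]
    by (simp_all add: length_users_order[OF fin inj])
  show ?thesis
    unfolding canonical_eq_takeWhile[OF fin'] \<tau>_def[symmetric]
  proof (rule length_takeWhile_less_P_nth)
    show "\<tau> - card Y \<le> length (zip ?U' ?S)"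
      using \<tau>_le card' by (simp add: length_users_order[OF fin']) arith
  next
    fix j assume "j < \<tau> - card Y"
    then have j: "j + card Y < \<tau>" by simp
    \<comment> \<open>the remaining user at j is no costlier than the original user at j + |Y|, whose
        slot is no more valuable than slot j\<close>
    have "c (?U' ! j) \<le> c (?U ! (j + card Y))"
      using users_order_Diff_nth_le[OF fin inj Y] j \<tau>_le by simp
    also have "\<dots> < v (fst (?S ! (j + card Y)))"
      using takeWhile_nth_holds[of "j + card Y" ?Q "zip ?U ?S"] j \<tau>_le
      unfolding \<tau> by (simp add: length_users_order[OF fin inj])
    also have "\<dots> \<le> v (fst (?S ! j))"
      using slots_order_antimono[of j "j + card Y" v B] j \<tau>_le by simp
    finally show "?Q (zip ?U' ?S ! j)"
      using j \<tau>_le card' by (simp add: length_users_order[OF fin'])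
  qed
qed

lemma threshold_ge_user_at:
  assumes fin: "finite X" and inj: "inj_on c X" and Y: "Y \<subseteq> X" "card Y \<le> \<gamma>"
    and \<tau>: "5 * \<gamma> < length (canonical c v X B)"
  shows "ereal (c (user_at c X (length (canonical c v X B) - 5 * \<gamma>)))
           \<le> threshold c v X B \<gamma> Y"
proof -
  define \<tau> where "\<tau> = length (canonical c v X B)"
  define \<tau>' where "\<tau>' = length (canonical c v (X - Y) B)"
  let ?U = "users_order c X" and ?U' = "users_order c (X - Y)"
  have fin': "finite (X - Y)" "inj_on c (X - Y)" using fin inj by (simp_all add: inj_on_diff)
  have "\<tau> - card Y \<le> \<tau>'"
    unfolding \<tau>_def \<tau>'_def by (rule length_canonical_Diff_ge[OF fin inj Y(1)])
  with \<tau> Y(2) have \<tau>': "4 * \<gamma> < \<tau>'" "\<tau> - 5 * \<gamma> \<le> \<tau>' - 4 * \<gamma>"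
    unfolding \<tau>_def by linarith+
  have "\<tau>' \<le> card (X - Y)"
    unfolding \<tau>'_def canonical_def
    by (rule order_trans[OF length_filter_le]) (simp add: length_users_order[OF fin'])
  moreover have "card (X - Y) \<le> card X" using fin by (simp add: card_mono)
  ultimately have j: "\<tau>' - 4 * \<gamma> - 1 < card (X - Y)" "\<tau>' - 4 * \<gamma> - 1 < card X"
    using \<tau>'(1) by linarith+
  have "c (?U ! (\<tau> - 5 * \<gamma> - 1)) \<le> c (?U ! (\<tau>' - 4 * \<gamma> - 1))"
    using sorted_wrt_less_nth_le[OF users_order_sorted_wrt[OF fin inj]] \<tau>'(2) j
    by (simp add: length_users_order[OF fin inj])
  also have "\<dots> \<le> c (?U' ! (\<tau>' - 4 * \<gamma> - 1))"
    using users_order_Diff_nth_ge[OF fin inj j(1)] .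
  finally show ?thesis
    using \<tau>'(1) unfolding threshold_def Let_def user_at_def \<tau>'_def[symmetric] \<tau>_def[symmetric]
    by simp
qed

theorem lemma9:
  fixes P :: "'p set" and c :: "'p \<Rightarrow> real"
    and M :: "'m set" and PM :: "'m \<Rightarrow> 'p set"
    and A :: "'a set" and u :: "'a \<Rightarrow> nat" and v :: "'a \<Rightarrow> real"
    and \<gamma> :: nat
  assumes "finite P" and "finite M" and "finite A"
    and "\<forall>p\<in>P. c p \<ge> 0"
    and "\<Union> (PM ` M) = P" and "\<forall>m\<in>M. \<forall>m'\<in>M. m \<noteq> m' \<longrightarrow> PM m \<inter> PM m' = {}"
    and "\<forall>a\<in>A. u a > 0" and "\<forall>a\<in>A. v a \<ge> 0"
    and "\<gamma> \<ge> 1" and "\<forall>a\<in>A. u a \<le> \<gamma>" and "\<forall>m\<in>M. card (PM m) \<le> \<gamma>"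
    and "inj_on c P" and "\<forall>p\<in>P. \<forall>a\<in>A. c p \<noteq> v a"
    and "5 * \<gamma> < length (canonical c v P (slots A u))"
  shows "\<forall>m\<in>M. threshold c v P (slots A u) \<gamma> (PM m)
            \<ge> ereal (c (user_at c P (length (canonical c v P (slots A u)) - 5 * \<gamma>)))"
proof
  fix m assume "m \<in> M"
  then have "PM m \<subseteq> P" "card (PM m) \<le> \<gamma>" using assms(5,11) by auto
  then show "threshold c v P (slots A u) \<gamma> (PM m)
            \<ge> ereal (c (user_at c P (length (canonical c v P (slots A u)) - 5 * \<gamma>)))"
    using threshold_ge_user_at[OF assms(1,12)] assms(14) by blast
qed

end
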